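(* Let $E$ be a Banach space, $Y$ a Banach lattice, $1\le q\le p\le\infty$ and $T:E\to Y$ a bounded linear operator. Then $T$ is positive strongly $(p,q)$-summing if and only if there exists $C>0$ such that for all $n\in\mathbb{N}$ and all $x_1,\dots,x_n\in E$, $$\|(T(x_i))_{i=1}^n\|_{\ell_p^{\pi}(Y)}\le C\|(x_i)_{i=1}^n\|_{q}.$$
   Context: $\|(x_i)_{i=1}^n\|_q=(\sum_i\|x_i\|^q)^{1/q}$ (sup norm if $q=\infty$); $p^{\ast}$ is the conjugate exponent of $p$. For a sequence $(y_i^{\ast})$ in $Y^{\ast}$, $\|(y_i^{\ast})\|_{p^{\ast},\omega}=\sup_{y\in B_{Y}}\|(\langle y_i^{\ast},y\rangle)_i\|_{p^{\ast}}$. For a Banach lattice $Y$, $\ell_{r,|\omega|}(Y^{\ast})$ is the Banach lattice of sequences $(y_n^{\ast})$ in $Y^{\ast}$ with $\|(y_n^{\ast})\|_{r,|\omega|}=\sup_{y\in B_Y\cap Y_+}\|(\langle|y_n^{\ast}|,y\rangle)_n\|_{r}<\infty$. For $1<p\le\infty$, $\ell_p^{\pi}(Y)$ is the space of sequences $(y_n)$ in $Y$ with $\|(y_n)\|_{\ell_p^{\pi}(Y)}=\sup\sum_n\langle y_n^{\ast},|y_n|\rangle<\infty$, the supremum over positive $(y_n^{\ast})$ in the unit ball of $\ell_{p^{\ast},|\omega|}(Y^{\ast})$ (finite sequences padded with zeros); by convention $\ell_1^{\pi}(Y)=\ell_1(Y)$. An operator $T:E\to Y$ is positive strongly $(p,q)$-summing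 if there is $C>0$ such that $\sum_{i=1}^n|\langle T(x_i),y_i^{\ast}\rangle|\le C\|(x_i)_{i=1}^n\|_q\,\|(y_i^{\ast})_{i=1}^n\|_{p^{\ast},\omega}$ for all $n$, all $x_i\in E$ and all positive $y_i^{\ast}\in Y^{\ast}$. *)

theory Defs
  imports Complex_Main "HOL-Library.Extended_Real"
begin

definition lmod :: "'a::{lattice, uminus} \<Rightarrow> 'a" where
  "lmod x = sup x (- x)"

class banach_lattice = banach + ordered_real_vector + lattice +
  assumes lattice_norm: "sup x (- x) \<le> sup y (- y) \<Longrightarrow> norm x \<le> norm y"

definition dual_elem :: "('y::real_normed_vector \<Rightarrow> real) \<Rightarrow> bool" where
  "dual_elem f \<longleftrightarrow> bounded_linear f"

definition positive_functional :: "('y::{real_normed_vector,order} \<Rightarrow> real) \<Rightarrow> bool" where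
  "positive_functional f \<longleftrightarrow> (\<forall>y. 0 \<le> y \<longrightarrow> 0 \<le> f y)"

definition conj_exp :: "ereal \<Rightarrow> ereal" where
  "conj_exp p = (if p = 1 then \<infinity> else if p = \<infinity> then 1
                 else ereal (real_of_ereal p / (real_of_ereal p - 1)))"

text \<open>The norm \<open>\<parallel>(x_i)_{i=1}^n\<parallel>_r\<close> of a finite sequence (indices 0..n-1).\<close>

definition lpnorm :: "ereal \<Rightarrow> nat \<Rightarrow> (nat \<Rightarrow> 'a::real_normed_vector) \<Rightarrow> real" where
  "lpnorm r n x = (if r = \<infinity> then Max (insert 0 ((\<lambda>i. norm (x i)) ` {..<n}))
                   else (\<Sum>i<n. norm (x i) powr real_of_ereal r) powr (1 / real_of_ereal r))"

definition weak_norm :: "ereal \<Rightarrow> nat \<Rightarrow> (nat \<Rightarrow> 'y::real_normed_vector \<Rightarrow> real) \<Rightarrow> real" where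
  "weak_norm r n ys = (SUP y\<in>{y. norm y \<le> 1}. lpnorm r n (\<lambda>i. ys i y))"

text \<open>For positive \<open>(y_i^* )\<close> (so that \<open>|y_i^*| = y_i^*\<close>), the norm of \<open>\<ell>_{r,|\<omega>|}(Y^* )\<close>:
\<open>sup_{y \<in> B_Y \<inter> Y_+} \<parallel>(<y_i^*, y>)_i\<parallel>_r\<close>.\<close>

definition abs_weak_norm_pos :: "ereal \<Rightarrow> nat \<Rightarrow> (nat \<Rightarrow> 'y::{real_normed_vector,order} \<Rightarrow> real) \<Rightarrow> real" where
  "abs_weak_norm_pos r n ys = (SUP y\<in>{y. norm y \<le> 1 \<and> 0 \<le> y}. lpnorm r n (\<lambda>i. ys i y))"

text \<open>Norm of the finite sequence \<open>(y_i)_{i<n}\<close> (padded with zeros) in \<open>\<ell>_p^\<pi>(Y)\<close>;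
\<open>\<ell>_1^\<pi>(Y) = \<ell>_1(Y)\<close>.\<close>

definition lp_pi_norm :: "ereal \<Rightarrow> nat \<Rightarrow> (nat \<Rightarrow> 'y::banach_lattice) \<Rightarrow> real" where
  "lp_pi_norm p n y =
     (if p = 1 then (\<Sum>i<n. norm (y i))
      else (SUP g\<in>{g. (\<forall>i. dual_elem (g i) \<and> positive_functional (g i))
                      \<and> (\<forall>i\<ge>n. g i = (\<lambda>_. 0))
                      \<and> abs_weak_norm_pos (conj_exp p) n g \<le> 1}.
              \<Sum>i<n. g i (lmod (y i))))"

definition pos_strongly_summing ::
  "ereal \<Rightarrow> ereal \<Rightarrow> ('e::real_normed_vector \<Rightarrow> 'y::banach_lattice) \<Rightarrow> bool" where
  "pos_strongly_summing p q T \<longleftrightarrow>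
     (\<exists>C>0. \<forall>n (x :: nat \<Rightarrow> 'e) (ys :: nat \<Rightarrow> 'y \<Rightarrow> real).
        (\<forall>i<n. dual_elem (ys i) \<and> positive_functional (ys i)) \<longrightarrow>
        (\<Sum>i<n. \<bar>ys i (T (x i))\<bar>) \<le> C * lpnorm q n x * weak_norm (conj_exp p) n ys)"

end

theory Submission
  imports Defs "HOL-Library.Lattice_Algebras"
begin

(* For p = 1 both conditions hold for every bounded T. For p > 1 the norm of l_p^pi(Y) is
   the supremum of sum_i g_i(|y_i|) over positive (g_i) in the unit ball of l_{p',|w|}(Y'),
   p' the conjugate exponent and Y' the dual. If (f_i) in Y' is positive with weak l_{p'}
   norm W > 0, then (f_i / W) is such a sequence and |f_i(y)| <= f_i(|y|), which gives the
   inequality of a positive strongly summing operator. Conversely, g(|y|) = |g_+(y)| + |g_-(y)|,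
   where g_+ and g_- are the components of g in the bands of y^+ and y^-. Since
   |g_+(z)|, |g_-(z)| <= g(|z|), the sequences of components have weak l_{p'} norm at most 1,
   so the summing inequality applied to each of them bounds sum_i g_i(|T x_i|) by 2 C ||x||_q. *)

context banach_lattice
begin
subclass lattice_ab_group_add ..
end

lemma lmod_nonneg: "0 \<le> lmod (y::'a::lattice_ab_group_add)"
proof -
  have "y \<le> lmod y" "- y \<le> lmod y" by (auto simp: lmod_def)
  then have "0 \<le> lmod y + lmod y" using add_mono by fastforce
  then show ?thesis by simp
qed

lemma lmod_eq_pprt_minus_nprt: "lmod (y::'a::lattice_ab_group_add) = pprt y - nprt y"
proof -
  have "pprt y - nprt y = pprt y + pprt (- y)" by (simp add: pprt_neg)
  also have "\<dots> = sup (y + sup (-y) 0) (0 + sup (-y) 0)"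
    unfolding pprt_def by (rule add_sup_distrib_right)
  also have "\<dots> = sup (sup 0 y) (sup (-y) 0)"
    by (simp add: add_sup_distrib_left)
  also have "\<dots> = sup (lmod y) 0" by (simp add: lmod_def ac_simps)
  also have "\<dots> = lmod y" using lmod_nonneg[of y] by (simp add: sup_absorb1)
  finally show ?thesis by simp
qed

lemma inf_pprt_uminus_nprt: "inf (pprt y) (- nprt y) = (0::'a::lattice_ab_group_add)"
proof -
  have "sup (pprt y) (- nprt y) = sup (sup y (-y)) 0"
    by (simp add: pprt_def flip: pprt_neg) (simp add: pprt_def ac_simps)
  then have "sup (pprt y) (- nprt y) = lmod y"
    using lmod_nonneg[of y] by (simp add: lmod_def sup_absorb1)
  moreover have "pprt y + (- nprt y) = sup (pprt y) (- nprt y) + inf (pprt y) (- nprt y)"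
    by (rule add_eq_inf_sup)
  ultimately show ?thesis using lmod_eq_pprt_minus_nprt[of y] by simp
qed

lemma inf_add_le:
  fixes a b c :: "'a::lattice_ab_group_add"
  assumes "0 \<le> a" "0 \<le> b" "0 \<le> c"
  shows "inf (a + b) c \<le> inf a c + inf b c"
proof -
  have "inf a c + inf b c = inf (inf (a + b) (a + c)) (inf (c + b) (c + c))"
    by (simp add: add_inf_distrib_left add_inf_distrib_right inf.assoc inf.commute inf.left_commute)
  moreover have "c \<le> a + c" "c \<le> c + b" "c \<le> c + c" using assms
    by (simp_all add: add_increasing add_increasing2)
  ultimately show ?thesis
    by (simp add: le_infI2 le_infI1 inf.coboundedI1 inf.coboundedI2)
qed

lemma norm_lmod: "norm (lmod (y::'y::banach_lattice)) = norm y"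
proof -
  have "- lmod y \<le> lmod y" using lmod_nonneg[of y]
    by (meson neg_le_0_iff_le order_trans)
  then have "lmod (lmod y) = lmod y" by (simp add: lmod_def[of "lmod y"] sup_absorb1)
  then have "sup (lmod y) (- lmod y) = sup y (-y)" by (simp add: lmod_def)
  then show ?thesis using lattice_norm[of "lmod y" y] lattice_norm[of y "lmod y"] by simp
qed

lemma scaleR_inf:
  fixes a b :: "'a::{ordered_real_vector, lattice}"
  assumes c: "0 < c"
  shows "c *\<^sub>R inf a b = inf (c *\<^sub>R a) (c *\<^sub>R b)"
proof (rule antisym)
  show "c *\<^sub>R inf a b \<le> inf (c *\<^sub>R a) (c *\<^sub>R b)"
    using c by (simp add: scaleR_left_mono)
  have "inverse c *\<^sub>R inf (c *\<^sub>R a) (c *\<^sub>R b) \<le> a"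
    using scaleR_left_mono[OF inf_le1[of "c *\<^sub>R a" "c *\<^sub>R b"], of "inverse c"] c by simp
  moreover have "inverse c *\<^sub>R inf (c *\<^sub>R a) (c *\<^sub>R b) \<le> b"
    using scaleR_left_mono[OF inf_le2[of "c *\<^sub>R a" "c *\<^sub>R b"], of "inverse c"] c by simp
  ultimately have "inverse c *\<^sub>R inf (c *\<^sub>R a) (c *\<^sub>R b) \<le> inf a b" by simp
  from scaleR_left_mono[OF this, of c] c
  show "inf (c *\<^sub>R a) (c *\<^sub>R b) \<le> c *\<^sub>R inf a b" by simp
qed

lemma inf_scaleR_eq_0:
  fixes a b :: "'a::{ordered_real_vector, lattice}"
  assumes "0 \<le> a" "0 \<le> b" "inf a b = 0" "0 \<le> t"
  shows "inf a (t *\<^sub>R b) = 0"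
proof (cases "t \<le> 1")
  case True
  have "inf a (t *\<^sub>R b) \<le> inf a b"
    using scaleR_right_mono[OF True assms(2)] by (simp add: le_infI2)
  moreover have "0 \<le> inf a (t *\<^sub>R b)" using assms by (simp add: scaleR_nonneg_nonneg)
  ultimately show ?thesis using assms(3) by simp
next
  case False
  then have t: "0 < t" "1 \<le> t" by auto
  have "a \<le> t *\<^sub>R a" using scaleR_right_mono[OF t(2) assms(1)] by simp
  then have "inf a (t *\<^sub>R b) \<le> inf (t *\<^sub>R a) (t *\<^sub>R b)" by (simp add: le_infI1)
  also have "\<dots> = t *\<^sub>R inf a b" by (rule scaleR_inf[OF t(1), symmetric])
  finally have "inf a (t *\<^sub>R b) \<le> 0" using assms(3) by simp
  moreover have "0 \<le> inf a (t *\<^sub>R b)" using assms by (simp add: scaleR_nonneg_nonneg)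
  ultimately show ?thesis by simp
qed

text \<open>For \<open>z \<ge> 0\<close>, \<open>band_component_pos g u z\<close> is \<open>g\<close> applied to the projection of \<open>z\<close> onto
  the band generated by \<open>u\<close>, i.e. to \<open>sup\<^sub>t inf z (t u)\<close>; taking the supremum after \<open>g\<close> avoids
  assuming that this supremum exists in \<open>Y\<close>. \<open>band_component\<close> extends it linearly via
  \<open>z = z\<^sup>+ - z\<^sup>-\<close>.\<close>

definition band_component_pos :: "('y::banach_lattice \<Rightarrow> real) \<Rightarrow> 'y \<Rightarrow> 'y \<Rightarrow> real" where
  "band_component_pos g u z = (SUP t\<in>{0::real..}. g (inf z (t *\<^sub>R u)))"

definition band_component :: "('y::banach_lattice \<Rightarrow> real) \<Rightarrow> 'y \<Rightarrow> 'y \<Rightarrow> real" where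
  "band_component g u z = band_component_pos g u (pprt z) - band_component_pos g u (- nprt z)"

locale positive_bounded_functional = bounded_linear g
  for g :: "'y::banach_lattice \<Rightarrow> real" +
  assumes positive: "positive_functional g"
begin

lemma nonneg: "0 \<le> y \<Longrightarrow> 0 \<le> g y"
  using positive unfolding positive_functional_def by blast

lemma mono: "a \<le> b \<Longrightarrow> g a \<le> g b"
  using nonneg[of "b - a"] by (simp add: diff)

lemma abs_le_lmod: "\<bar>g y\<bar> \<le> g (lmod y)"
proof -
  have "g y = g (pprt y) + g (nprt y)" by (metis prts add)
  moreover have "g (lmod y) = g (pprt y) - g (nprt y)" by (simp add: lmod_eq_pprt_minus_nprt diff)
  moreover have "0 \<le> g (pprt y)" "0 \<le> - g (nprt y)"
    using nonneg[of "pprt y"] nonneg[of "- nprt y"] by (simp_all add: neg)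
  ultimately show ?thesis by linarith
qed

context
  fixes u :: 'y
  assumes u_nonneg: "0 \<le> u"
begin

lemma bdd_above_band_component_pos:
  "0 \<le> z \<Longrightarrow> bdd_above ((\<lambda>t. g (inf z (t *\<^sub>R u))) ` {0..})"
  by (rule bdd_aboveI2[of _ _ "g z"]) (auto intro: mono)

lemma band_component_pos_le: "0 \<le> z \<Longrightarrow> band_component_pos g u z \<le> g z"
  unfolding band_component_pos_def by (rule cSUP_least) (auto intro: mono)

lemma band_component_pos_ge:
  "0 \<le> z \<Longrightarrow> 0 \<le> t \<Longrightarrow> g (inf z (t *\<^sub>R u)) \<le> band_component_pos g u z"
  unfolding band_component_pos_def by (rule cSUP_upper[OF _ bdd_above_band_component_pos]) auto

lemma band_component_pos_nonneg: "0 \<le> z \<Longrightarrow> 0 \<le> band_component_pos g u z"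
  using band_component_pos_ge[of z 0] u_nonneg by (simp add: inf_absorb2 zero)

lemma band_component_pos_self: "band_component_pos g u u = g u"
  using band_component_pos_ge[of u 1] band_component_pos_le[of u] u_nonneg by simp

lemma band_component_pos_disjoint:
  "0 \<le> w \<Longrightarrow> inf w u = 0 \<Longrightarrow> band_component_pos g u w = 0"
  unfolding band_component_pos_def using inf_scaleR_eq_0[OF _ u_nonneg] zero by simp

lemma band_component_pos_0: "band_component_pos g u 0 = 0"
  using band_component_pos_le[of 0] band_component_pos_nonneg[of 0] zero by simp

lemma band_component_pos_add_le:
  assumes a: "0 \<le> a" and b: "0 \<le> b"
  shows "band_component_pos g u (a + b) \<le> band_component_pos g u a + band_component_pos g u b"
  unfolding band_component_pos_def[of g u "a + b"]
proof (rule cSUP_least)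
  fix t :: real assume t: "t \<in> {0..}"
  have "g (inf (a + b) (t *\<^sub>R u)) \<le> g (inf a (t *\<^sub>R u) + inf b (t *\<^sub>R u))"
    using a b u_nonneg t by (intro mono inf_add_le) (auto simp: scaleR_nonneg_nonneg)
  also have "\<dots> \<le> band_component_pos g u a + band_component_pos g u b"
    using band_component_pos_ge[OF a, of t] band_component_pos_ge[OF b, of t] t by (simp add: add)
  finally show "g (inf (a + b) (t *\<^sub>R u)) \<le> band_component_pos g u a + band_component_pos g u b" .
qed simp

lemma inf_scaleR_add_le_band_component_pos:
  assumes a: "0 \<le> a" and b: "0 \<le> b" and s: "0 \<le> s" and t: "0 \<le> t"
  shows "g (inf a (s *\<^sub>R u)) + g (inf b (t *\<^sub>R u)) \<le> band_component_pos g u (a + b)"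
proof -
  define m where "m = max s t"
  have "s *\<^sub>R u \<le> m *\<^sub>R u" "t *\<^sub>R u \<le> m *\<^sub>R u"
    using u_nonneg by (auto simp: m_def intro!: scaleR_right_mono)
  then have "g (inf a (s *\<^sub>R u)) + g (inf b (t *\<^sub>R u)) \<le> g (inf a (m *\<^sub>R u)) + g (inf b (m *\<^sub>R u))"
    by (intro add_mono mono inf_mono) auto
  also have "\<dots> = g (inf a (m *\<^sub>R u) + inf b (m *\<^sub>R u))" by (simp add: add)
  also have "\<dots> \<le> g (inf (a + b) ((2 * m) *\<^sub>R u))"
  proof (rule mono)
    have "inf a (m *\<^sub>R u) + inf b (m *\<^sub>R u) \<le> m *\<^sub>R u + m *\<^sub>R u"
      by (intro add_mono) auto
    also have "\<dots> = (2 * m) *\<^sub>R u" by (simp add: scaleR_add_left[symmetric])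
    finally show "inf a (m *\<^sub>R u) + inf b (m *\<^sub>R u) \<le> inf (a + b) ((2 * m) *\<^sub>R u)"
      by (simp add: add_mono le_infI1)
  qed
  also have "\<dots> \<le> band_component_pos g u (a + b)"
    using band_component_pos_ge[of "a + b" "2 * m"] a b s by (simp add: m_def)
  finally show ?thesis .
qed

lemma band_component_pos_add:
  assumes a: "0 \<le> a" and b: "0 \<le> b"
  shows "band_component_pos g u (a + b) = band_component_pos g u a + band_component_pos g u b"
proof (rule antisym)
  have "band_component_pos g u a \<le> band_component_pos g u (a + b) - band_component_pos g u b"
    unfolding band_component_pos_def[of g u a]
  proof (rule cSUP_least)
    fix s :: real assume s: "s \<in> {0..}"
    have "band_component_pos g u b \<le> band_component_pos g u (a + b) - g (inf a (s *\<^sub>R u))"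
      unfolding band_component_pos_def[of g u b]
      by (rule cSUP_least) (use inf_scaleR_add_le_band_component_pos[OF a b] s in \<open>auto simp: algebra_simps\<close>)
    then show "g (inf a (s *\<^sub>R u)) \<le> band_component_pos g u (a + b) - band_component_pos g u b"
      by simp
  qed simp
  then show "band_component_pos g u a + band_component_pos g u b \<le> band_component_pos g u (a + b)"
    by simp
qed (rule band_component_pos_add_le[OF a b])

lemma band_component_pos_scaleR_le:
  assumes c: "0 < c" and z: "0 \<le> z"
  shows "band_component_pos g u (c *\<^sub>R z) \<le> c * band_component_pos g u z"
  unfolding band_component_pos_def[of g u "c *\<^sub>R z"]
proof (rule cSUP_least)
  fix t :: real assume t: "t \<in> {0..}"
  have "inf (c *\<^sub>R z) (t *\<^sub>R u) = c *\<^sub>R inf z ((t / c) *\<^sub>R u)"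
    using scaleR_inf[OF c, of z "(t / c) *\<^sub>R u"] c by simp
  then have "g (inf (c *\<^sub>R z) (t *\<^sub>R u)) = c * g (inf z ((t / c) *\<^sub>R u))" by (simp add: scaleR)
  also have "\<dots> \<le> c * band_component_pos g u z"
    using band_component_pos_ge[OF z, of "t / c"] c t by simp
  finally show "g (inf (c *\<^sub>R z) (t *\<^sub>R u)) \<le> c * band_component_pos g u z" .
qed simp

lemma band_component_pos_scaleR:
  assumes c: "0 \<le> c" and z: "0 \<le> z"
  shows "band_component_pos g u (c *\<^sub>R z) = c * band_component_pos g u z"
proof (cases "c = 0")
  case True
  then show ?thesis by (simp add: band_component_pos_0)
next
  case False
  with c have c: "0 < c" by simp
  have "band_component_pos g u z = band_component_pos g u (inverse c *\<^sub>R (c *\<^sub>R z))"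
    using c by simp
  also have "\<dots> \<le> inverse c * band_component_pos g u (c *\<^sub>R z)"
    using c z by (intro band_component_pos_scaleR_le) (auto simp: scaleR_nonneg_nonneg)
  finally have "c * band_component_pos g u z \<le> band_component_pos g u (c *\<^sub>R z)"
    using c by (simp add: field_simps)
  with band_component_pos_scaleR_le[OF c z] show ?thesis by simp
qed

lemma band_component_diff:
  assumes a: "0 \<le> a" and b: "0 \<le> b"
  shows "band_component g u (a - b) = band_component_pos g u a - band_component_pos g u b"
proof -
  have "pprt (a - b) + b = a + (- nprt (a - b))"
    using prts[of "a - b"] by (simp add: algebra_simps)
  then have "band_component_pos g u (pprt (a - b)) + band_component_pos g u b
      = band_component_pos g u a + band_component_pos g u (- nprt (a - b))"
    using band_component_pos_add a b by (metis nprt_le_zero neg_0_le_iff_le zero_le_pprt)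
  then show ?thesis unfolding band_component_def by simp
qed

lemma band_component_add:
  "band_component g u (x + y) = band_component g u x + band_component g u y"
proof -
  have "(pprt x + pprt y) - ((- nprt x) + (- nprt y)) = (pprt x + nprt x) + (pprt y + nprt y)"
    by (simp add: algebra_simps)
  then have "x + y = (pprt x + pprt y) - ((- nprt x) + (- nprt y))"
    using prts[of x] prts[of y] by metis
  then have "band_component g u (x + y)
      = band_component_pos g u (pprt x + pprt y) - band_component_pos g u ((- nprt x) + (- nprt y))"
    by (simp only: band_component_diff add_nonneg_nonneg zero_le_pprt neg_0_le_iff_le nprt_le_zero)
  also have "\<dots> = band_component_pos g u (pprt x) + band_component_pos g u (pprt y)
      - (band_component_pos g u (- nprt x) + band_component_pos g u (- nprt y))"
    by (simp only: band_component_pos_add zero_le_pprt neg_0_le_iff_le nprt_le_zero)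
  also have "\<dots> = band_component g u x + band_component g u y"
    by (simp add: band_component_def)
  finally show ?thesis .
qed

lemma band_component_uminus: "band_component g u (- x) = - band_component g u x"
  by (simp add: band_component_def pprt_neg nprt_neg)

lemma band_component_scaleR: "band_component g u (r *\<^sub>R x) = r * band_component g u x"
proof -
  have nonneg_case: "band_component g u (c *\<^sub>R x) = c * band_component g u x" if c: "0 \<le> c" for c x
  proof -
    have "c *\<^sub>R x = c *\<^sub>R pprt x - c *\<^sub>R (- nprt x)"
      using prts[of x] by (simp add: algebra_simps flip: scaleR_right_distrib)
    then have "band_component g u (c *\<^sub>R x)
        = band_component_pos g u (c *\<^sub>R pprt x) - band_component_pos g u (c *\<^sub>R (- nprt x))"
      using c by (simp only: band_component_diff scaleR_nonneg_nonneg zero_le_pprt neg_0_le_iff_le nprt_le_zero)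
    also have "\<dots> = c * band_component_pos g u (pprt x) - c * band_component_pos g u (- nprt x)"
      by (simp only: band_component_pos_scaleR[OF c] zero_le_pprt neg_0_le_iff_le nprt_le_zero)
    also have "\<dots> = c * band_component g u x"
      by (simp add: band_component_def right_diff_distrib)
    finally show ?thesis .
  qed
  show ?thesis
  proof (cases "0 \<le> r")
    case True
    then show ?thesis by (rule nonneg_case)
  next
    case False
    then show ?thesis using nonneg_case[of "- r" "- x"] by (simp add: band_component_uminus)
  qed
qed

lemma abs_band_component_le: "\<bar>band_component g u x\<bar> \<le> g (lmod x)"
proof -
  have pn: "0 \<le> pprt x" "0 \<le> - nprt x" by simp_all
  have "\<bar>band_component g u x\<bar> \<le> g (pprt x) + g (- nprt x)"
    using band_component_pos_le[OF pn(1)] band_component_pos_le[OF pn(2)]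
      band_component_pos_nonneg[OF pn(1)] band_component_pos_nonneg[OF pn(2)]
    unfolding band_component_def by (simp add: abs_le_iff)
  also have "\<dots> = g (lmod x)" by (simp add: lmod_eq_pprt_minus_nprt diff neg)
  finally show ?thesis .
qed

lemma positive_bounded_functional_band_component:
  "positive_bounded_functional (band_component g u)"
proof -
  obtain K where K: "\<And>x. norm (g x) \<le> norm x * K" using bounded by blast
  have "bounded_linear (band_component g u)"
  proof (rule bounded_linear_intro)
    fix x
    have "\<bar>band_component g u x\<bar> \<le> g (lmod x)" by (rule abs_band_component_le)
    also have "\<dots> \<le> norm x * K" using K[of "lmod x"] by (simp add: norm_lmod)
    finally show "norm (band_component g u x) \<le> norm x * K" by simp
  qed (simp_all add: band_component_add band_component_scaleR)
  moreover have "positive_functional (band_component g u)"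
    unfolding positive_functional_def band_component_def
    by (auto simp: band_component_pos_nonneg band_component_pos_0)
  ultimately show ?thesis
    by (simp add: positive_bounded_functional_def positive_bounded_functional_axioms_def)
qed

end

text \<open>Since \<open>y\<^sup>+\<close> and \<open>y\<^sup>-\<close> are disjoint, the component along \<open>y\<^sup>+\<close> sees only \<open>y\<^sup>+\<close>
  and the one along \<open>y\<^sup>-\<close> only \<open>y\<^sup>-\<close>.\<close>

lemma lmod_eq_band_components:
  "g (lmod y) = \<bar>band_component g (pprt y) y\<bar> + \<bar>band_component g (- nprt y) y\<bar>"
proof -
  have disjoint: "inf (pprt y) (- nprt y) = 0" "inf (- nprt y) (pprt y) = 0"
    using inf_pprt_uminus_nprt[of y] by (simp_all add: inf.commute)
  have "band_component g (pprt y) y = g (pprt y)"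
    using band_component_pos_self[of "pprt y"] band_component_pos_disjoint[of "pprt y" "- nprt y"]
      disjoint(2) by (simp add: band_component_def)
  moreover have "band_component g (- nprt y) y = - g (- nprt y)"
    using band_component_pos_self[of "- nprt y"] band_component_pos_disjoint[of "- nprt y" "pprt y"]
      disjoint(1) by (simp add: band_component_def)
  ultimately show ?thesis using nonneg[of "pprt y"] nonneg[of "- nprt y"]
    by (simp add: lmod_eq_pprt_minus_nprt diff neg)
qed

end

lemma positive_bounded_functional_iff:
  "positive_bounded_functional g \<longleftrightarrow> dual_elem g \<and> positive_functional g"
  by (simp add: positive_bounded_functional_def positive_bounded_functional_axioms_def dual_elem_def)

lemma conj_exp_pos: "1 \<le> p \<Longrightarrow> 0 < conj_exp p"
  by (cases p) (auto simp: conj_exp_def)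

lemma real_of_ereal_pos_if_finite: "0 < r \<Longrightarrow> r \<noteq> \<infinity> \<Longrightarrow> 0 < real_of_ereal r"
  by (cases r) auto

lemma lpnorm_nonneg: "0 \<le> lpnorm r n x"
  unfolding lpnorm_def by (auto intro: Max_ge order_trans[OF _ Max_ge])

lemma lpnorm_one: "lpnorm 1 n x = (\<Sum>i<n. norm (x i))"
  unfolding lpnorm_def by (simp add: sum_nonneg)

lemma lpnorm_zero: "lpnorm r n (\<lambda>i. 0 :: 'a::real_normed_vector) = 0"
  by (cases "n = 0") (auto simp: lpnorm_def image_constant_conv)

lemma lpnorm_mono:
  assumes r: "0 < r" and le: "\<And>i. i < n \<Longrightarrow> norm (a i) \<le> norm (b i)"
  shows "lpnorm r n a \<le> lpnorm r n b"
proof (cases "r = \<infinity>")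
  case True
  have "Max (insert 0 ((\<lambda>i. norm (a i)) ` {..<n})) \<le> Max (insert 0 ((\<lambda>i. norm (b i)) ` {..<n}))"
    using le by (auto intro!: Max.boundedI intro: Max_ge order_trans[OF _ Max_ge])
  then show ?thesis unfolding lpnorm_def using True by simp
next
  case False
  then have "0 < real_of_ereal r" using r by (rule real_of_ereal_pos_if_finite[rotated])
  then show ?thesis unfolding lpnorm_def using False le
    by (auto intro!: powr_mono2 sum_mono sum_nonneg)
qed

lemma norm_le_lpnorm:
  assumes r: "0 < r" and i: "i < n"
  shows "norm (a i) \<le> lpnorm r n a"
proof (cases "r = \<infinity>")
  case True
  then show ?thesis unfolding lpnorm_def using i by (auto intro: Max_ge)
next
  case False
  let ?s = "real_of_ereal r"
  have s: "0 < ?s" using r False by (rule real_of_ereal_pos_if_finite)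
  have "norm (a i) = (norm (a i) powr ?s) powr (1 / ?s)" using s by (simp add: powr_powr)
  also have "\<dots> \<le> (\<Sum>j<n. norm (a j) powr ?s) powr (1 / ?s)"
    using s i by (intro powr_mono2) (auto intro!: member_le_sum)
  finally show ?thesis unfolding lpnorm_def using False by simp
qed

lemma lpnorm_mult_le:
  assumes r: "0 < r" and c: "0 \<le> c"
  shows "lpnorm r n (\<lambda>i. c * (a i :: real)) \<le> c * lpnorm r n a"
proof (cases "r = \<infinity>")
  case True
  have "Max (insert 0 ((\<lambda>i. norm (c * a i)) ` {..<n})) \<le> c * Max (insert 0 ((\<lambda>i. norm (a i)) ` {..<n}))"
    using c by (auto simp: abs_mult intro!: Max.boundedI mult_left_mono Max_ge)
  then show ?thesis unfolding lpnorm_def using True by simp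
next
  case False
  let ?s = "real_of_ereal r"
  have s: "0 < ?s" using r False by (rule real_of_ereal_pos_if_finite)
  have "(\<Sum>i<n. \<bar>c * a i\<bar> powr ?s) = c powr ?s * (\<Sum>i<n. \<bar>a i\<bar> powr ?s)"
    using c by (simp add: abs_mult powr_mult sum_distrib_left)
  then have "(\<Sum>i<n. \<bar>c * a i\<bar> powr ?s) powr (1 / ?s)
      = (c powr ?s) powr (1 / ?s) * (\<Sum>i<n. \<bar>a i\<bar> powr ?s) powr (1 / ?s)"
    using c by (simp add: powr_mult sum_nonneg)
  also have "(c powr ?s) powr (1 / ?s) = c" using s c by (simp add: powr_powr)
  finally show ?thesis unfolding lpnorm_def using False by simp
qed

lemma bdd_above_lpnorm_dual:
  assumes r: "0 < r" and f: "\<forall>i<n. dual_elem (f i)" and A: "\<forall>y\<in>A. norm y \<le> 1"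
  shows "bdd_above ((\<lambda>y. lpnorm r n (\<lambda>i. f i y)) ` A)"
proof -
  have "\<forall>i. \<exists>K. i < n \<longrightarrow> 0 \<le> K \<and> (\<forall>y. \<bar>f i y\<bar> \<le> norm y * K)"
  proof
    fix i
    show "\<exists>K. i < n \<longrightarrow> 0 \<le> K \<and> (\<forall>y. \<bar>f i y\<bar> \<le> norm y * K)"
    proof (cases "i < n")
      case True
      then have "bounded_linear (f i)" using f by (simp add: dual_elem_def)
      then show ?thesis using bounded_linear.nonneg_bounded by fastforce
    qed simp
  qed
  from choice[OF this] obtain K
    where K: "\<And>i y. i < n \<Longrightarrow> \<bar>f i y\<bar> \<le> norm y * K i" "\<And>i. i < n \<Longrightarrow> 0 \<le> K i"
    by blast
  show ?thesis
  proof (rule bdd_aboveI2)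
    fix y assume "y \<in> A"
    then have "\<bar>f i y\<bar> \<le> K i" if "i < n" for i
      using A K[OF that] by (meson mult_left_le_one_le order_trans norm_ge_zero)
    then show "lpnorm r n (\<lambda>i. f i y) \<le> lpnorm r n K"
      using K(2) by (intro lpnorm_mono[OF r]) fastforce
  qed
qed

lemma abs_le_SUP_lpnorm:
  assumes r: "0 < r" and f: "\<forall>i<n. dual_elem (f i)" and i: "i < n"
    and A: "\<forall>z\<in>A. norm z \<le> 1" and y: "y \<noteq> 0 \<Longrightarrow> y /\<^sub>R norm y \<in> A"
  shows "\<bar>f i y\<bar> \<le> (SUP z\<in>A. lpnorm r n (\<lambda>j. f j z)) * norm y"
proof -
  have bl: "bounded_linear (f i)" using f i by (simp add: dual_elem_def)
  show ?thesis
  proof (cases "y = 0")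
    case True
    then show ?thesis by (simp add: real_vector.linear_0[OF bounded_linear.linear[OF bl]])
  next
    case False
    have "\<bar>f i (y /\<^sub>R norm y)\<bar> \<le> lpnorm r n (\<lambda>j. f j (y /\<^sub>R norm y))"
      using norm_le_lpnorm[OF r i, of "\<lambda>j. f j (y /\<^sub>R norm y)"] by simp
    also have "\<dots> \<le> (SUP z\<in>A. lpnorm r n (\<lambda>j. f j z))"
      by (rule cSUP_upper) (use y False bdd_above_lpnorm_dual[OF r f A] in auto)
    finally have "\<bar>f i y\<bar> / norm y \<le> (SUP z\<in>A. lpnorm r n (\<lambda>j. f j z))"
      by (simp add: linear_cmul[OF bounded_linear.linear[OF bl]] abs_mult divide_inverse mult.commute)
    then show ?thesis using False by (simp add: divide_le_eq)
  qed
qed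
lemma abs_le_weak_norm:
  assumes "0 < r" "\<forall>i<n. dual_elem (f i)" "i < n"
  shows "\<bar>f i y\<bar> \<le> weak_norm r n f * norm y"
  unfolding weak_norm_def by (rule abs_le_SUP_lpnorm[OF assms]) auto

lemma abs_le_abs_weak_norm_pos:
  fixes f :: "nat \<Rightarrow> 'y::banach_lattice \<Rightarrow> real"
  assumes "0 < r" "\<forall>i<n. dual_elem (f i)" "i < n" and "0 \<le> y"
  shows "\<bar>f i y\<bar> \<le> abs_weak_norm_pos r n f * norm y"
  unfolding abs_weak_norm_pos_def
  by (rule abs_le_SUP_lpnorm[OF assms(1-3)]) (use assms(4) in \<open>auto simp: scaleR_nonneg_nonneg\<close>)

lemma lpnorm_le_weak_norm:
  assumes "0 < r" "\<forall>i<n. dual_elem (f i)" "norm y \<le> 1"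
  shows "lpnorm r n (\<lambda>i. f i y) \<le> weak_norm r n f"
  unfolding weak_norm_def
  by (rule cSUP_upper) (use assms bdd_above_lpnorm_dual[OF assms(1,2), of "{y. norm y \<le> 1}"] in auto)

lemma weak_norm_nonneg:
  assumes "0 < r" "\<forall>i<n. dual_elem (f i)"
  shows "0 \<le> weak_norm r n f"
  using lpnorm_le_weak_norm[OF assms, of 0] lpnorm_nonneg[of r n "\<lambda>i. f i 0"] by simp
lemma weak_norm_le_abs_weak_norm_pos:
  fixes g :: "nat \<Rightarrow> 'y::banach_lattice \<Rightarrow> real"
  assumes r: "0 < r" and g: "\<forall>i<n. dual_elem (g i)"
    and h: "\<And>i y. i < n \<Longrightarrow> \<bar>h i y\<bar> \<le> g i (lmod y)"
  shows "weak_norm r n h \<le> abs_weak_norm_pos r n g"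
  unfolding weak_norm_def
proof (rule cSUP_least)
  fix y :: 'y assume y: "y \<in> {y. norm y \<le> 1}"
  have "lpnorm r n (\<lambda>i. h i y) \<le> lpnorm r n (\<lambda>i. g i (lmod y))"
    using h by (intro lpnorm_mono[OF r]) (fastforce intro: order_trans[OF _ abs_ge_self])
  also have "\<dots> \<le> abs_weak_norm_pos r n g" unfolding abs_weak_norm_pos_def
    using y lmod_nonneg[of y] bdd_above_lpnorm_dual[OF r g, of "{y. norm y \<le> 1 \<and> 0 \<le> y}"]
    by (intro cSUP_upper) (auto simp: norm_lmod)
  finally show "lpnorm r n (\<lambda>i. h i y) \<le> abs_weak_norm_pos r n g" .
qed (auto intro!: exI[of _ 0])

definition pi_dual_ball :: "ereal \<Rightarrow> nat \<Rightarrow> (nat \<Rightarrow> 'y::banach_lattice \<Rightarrow> real) set" where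
  "pi_dual_ball r n = {g. (\<forall>i. dual_elem (g i) \<and> positive_functional (g i))
                        \<and> (\<forall>i\<ge>n. g i = (\<lambda>_. 0)) \<and> abs_weak_norm_pos r n g \<le> 1}"

lemma lp_pi_norm_eq_SUP:
  "p \<noteq> 1 \<Longrightarrow> lp_pi_norm p n y = (SUP g\<in>pi_dual_ball (conj_exp p) n. \<Sum>i<n. g i (lmod (y i)))"
  by (simp add: lp_pi_norm_def pi_dual_ball_def)

lemma zero_in_pi_dual_ball: "(\<lambda>i (_::'y::banach_lattice). 0) \<in> pi_dual_ball r n"
proof -
  have "abs_weak_norm_pos r n (\<lambda>i (_::'y::banach_lattice). 0 :: real) = 0"
    unfolding abs_weak_norm_pos_def lpnorm_zero by (rule cSUP_const) (auto intro!: exI[of _ 0])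
  then show ?thesis
    by (simp add: pi_dual_ball_def dual_elem_def positive_functional_def bounded_linear_zero)
qed

lemma sum_le_norm_if_in_pi_dual_ball:
  assumes r: "0 < r" and g: "g \<in> pi_dual_ball r n"
  shows "(\<Sum>i<n. g i (lmod (y i))) \<le> (\<Sum>i<n. norm (y i))"
proof (rule sum_mono)
  fix i assume i: "i \<in> {..<n}"
  have dual: "\<forall>i<n. dual_elem (g i)" using g by (simp add: pi_dual_ball_def)
  have "g i (lmod (y i)) \<le> abs_weak_norm_pos r n g * norm (lmod (y i))"
    using abs_le_abs_weak_norm_pos[OF r dual, of i "lmod (y i)"] i lmod_nonneg[of "y i"] by simp
  also have "\<dots> \<le> norm (y i)"
    using g mult_right_mono[of "abs_weak_norm_pos r n g" 1 "norm (y i)"]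
    by (simp add: norm_lmod pi_dual_ball_def)
  finally show "g i (lmod (y i)) \<le> norm (y i)" .
qed

lemma sum_le_lp_pi_norm:
  assumes "1 \<le> p" "p \<noteq> 1" and "g \<in> pi_dual_ball (conj_exp p) n"
  shows "(\<Sum>i<n. g i (lmod (y i))) \<le> lp_pi_norm p n y"
  unfolding lp_pi_norm_eq_SUP[OF assms(2)]
  by (rule cSUP_upper[OF assms(3)], rule bdd_aboveI2)
    (use sum_le_norm_if_in_pi_dual_ball[OF conj_exp_pos[OF assms(1)]] in blast)

lemma lp_pi_norm_le:
  assumes "p \<noteq> 1" and "\<And>g. g \<in> pi_dual_ball (conj_exp p) n \<Longrightarrow> (\<Sum>i<n. g i (lmod (y i))) \<le> B"
  shows "lp_pi_norm p n y \<le> B"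
  unfolding lp_pi_norm_eq_SUP[OF assms(1)] using zero_in_pi_dual_ball assms(2)
  by (intro cSUP_least) blast+

lemma normalized_in_pi_dual_ball:
  fixes ys :: "nat \<Rightarrow> 'y::banach_lattice \<Rightarrow> real"
  assumes r: "0 < r" and ys: "\<forall>i<n. dual_elem (ys i) \<and> positive_functional (ys i)"
    and W: "0 < weak_norm r n ys"
  shows "(\<lambda>i. if i < n then (\<lambda>z. ys i z / weak_norm r n ys) else (\<lambda>_. 0)) \<in> pi_dual_ball r n"
    (is "?g \<in> _")
proof -
  let ?W = "weak_norm r n ys"
  have dual: "\<forall>i<n. dual_elem (ys i)" using ys by simp
  have "dual_elem (?g i) \<and> positive_functional (?g i)" for i
    using ys W
    by (auto simp: dual_elem_def positive_functional_def bounded_linear_zero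
        intro!: bounded_linear_compose[OF bounded_linear_divide])
  moreover have "abs_weak_norm_pos r n ?g \<le> 1" unfolding abs_weak_norm_pos_def
  proof (rule cSUP_least)
    fix y :: 'y assume y: "y \<in> {y. norm y \<le> 1 \<and> 0 \<le> y}"
    have "lpnorm r n (\<lambda>i. ?g i y) \<le> lpnorm r n (\<lambda>i. inverse ?W * ys i y)"
      by (rule lpnorm_mono[OF r]) (simp add: divide_inverse mult.commute)
    also have "\<dots> \<le> inverse ?W * lpnorm r n (\<lambda>i. ys i y)"
      using W by (intro lpnorm_mult_le[OF r]) simp
    also have "\<dots> \<le> inverse ?W * ?W"
      using W y by (intro mult_left_mono lpnorm_le_weak_norm[OF r dual]) auto
    finally show "lpnorm r n (\<lambda>i. ?g i y) \<le> 1" using W by simp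
  qed (auto intro!: exI[of _ 0])
  ultimately show ?thesis unfolding pi_dual_ball_def by auto
qed

lemma sum_abs_le_weak_norm_mult_lp_pi_norm:
  fixes ys :: "nat \<Rightarrow> 'y::banach_lattice \<Rightarrow> real"
  assumes p: "1 \<le> p" and ys: "\<forall>i<n. dual_elem (ys i) \<and> positive_functional (ys i)"
  shows "(\<Sum>i<n. \<bar>ys i (y i)\<bar>) \<le> weak_norm (conj_exp p) n ys * lp_pi_norm p n y"
proof -
  let ?r = "conj_exp p" and ?W = "weak_norm (conj_exp p) n ys"
  have r: "0 < ?r" using p by (rule conj_exp_pos)
  have dual: "\<forall>i<n. dual_elem (ys i)" using ys by simp
  have W: "0 \<le> ?W" by (rule weak_norm_nonneg[OF r dual])
  have le_norms: "(\<Sum>i<n. \<bar>ys i (y i)\<bar>) \<le> ?W * (\<Sum>i<n. norm (y i))"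
    unfolding sum_distrib_left by (intro sum_mono abs_le_weak_norm[OF r dual]) simp
  consider "p = 1" | "?W = 0" | "p \<noteq> 1" "0 < ?W" using W by fastforce
  then show ?thesis
  proof cases
    case 1
    then show ?thesis using le_norms by (simp add: lp_pi_norm_def)
  next
    case 2
    then show ?thesis using le_norms by simp
  next
    case 3
    let ?g = "\<lambda>i. if i < n then (\<lambda>z. ys i z / ?W) else (\<lambda>_. 0)"
    have "(\<Sum>i<n. \<bar>ys i (y i)\<bar>) \<le> (\<Sum>i<n. ys i (lmod (y i)))"
      using ys positive_bounded_functional.abs_le_lmod positive_bounded_functional_iff
      by (intro sum_mono) auto
    also have "\<dots> = ?W * (\<Sum>i<n. ?g i (lmod (y i)))"
      using 3 by (simp add: sum_distrib_left)
    also have "\<dots> \<le> ?W * lp_pi_norm p n y"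
      using 3 normalized_in_pi_dual_ball[OF r ys] by (intro mult_left_mono sum_le_lp_pi_norm[OF p]) auto
    finally show ?thesis .
  qed
qed

lemma band_components_in_weak_ball:
  fixes g :: "nat \<Rightarrow> 'y::banach_lattice \<Rightarrow> real"
  assumes r: "0 < r" and g: "g \<in> pi_dual_ball r n" and u: "\<And>i. 0 \<le> u i"
  shows "\<forall>i<n. dual_elem (band_component (g i) (u i)) \<and> positive_functional (band_component (g i) (u i))"
    and "weak_norm r n (\<lambda>i. band_component (g i) (u i)) \<le> 1"
proof -
  have g_pos: "positive_bounded_functional (g i)" for i
    using g by (simp add: pi_dual_ball_def positive_bounded_functional_iff)
  show "\<forall>i<n. dual_elem (band_component (g i) (u i)) \<and> positive_functional (band_component (g i) (u i))"
    using positive_bounded_functional.positive_bounded_functional_band_component[OF g_pos u]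
    by (simp add: positive_bounded_functional_iff)
  have "weak_norm r n (\<lambda>i. band_component (g i) (u i)) \<le> abs_weak_norm_pos r n g"
    using g positive_bounded_functional.abs_band_component_le[OF g_pos u]
    by (intro weak_norm_le_abs_weak_norm_pos[OF r]) (auto simp: pi_dual_ball_def)
  also have "\<dots> \<le> 1" using g by (simp add: pi_dual_ball_def)
  finally show "weak_norm r n (\<lambda>i. band_component (g i) (u i)) \<le> 1" .
qed

lemma lp_pi_norm_le_if_pos_strongly_summing:
  fixes T :: "'e::real_normed_vector \<Rightarrow> 'y::banach_lattice"
  assumes p: "1 < p" and T: "pos_strongly_summing p q T"
  shows "\<exists>C>0. \<forall>n x. lp_pi_norm p n (\<lambda>i. T (x i)) \<le> C * lpnorm q n x"
proof -
  let ?r = "conj_exp p"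
  obtain C where C: "0 < C" and summing: "\<And>n x ys. \<forall>i<n. dual_elem (ys i) \<and> positive_functional (ys i) \<Longrightarrow>
      (\<Sum>i<n. \<bar>ys i (T (x i))\<bar>) \<le> C * lpnorm q n x * weak_norm ?r n ys"
    using T unfolding pos_strongly_summing_def by blast
  have r: "0 < ?r" using p by (intro conj_exp_pos) simp
  have "lp_pi_norm p n (\<lambda>i. T (x i)) \<le> 2 * C * lpnorm q n x" for n x
  proof (rule lp_pi_norm_le)
    show "p \<noteq> 1" using p by simp
    fix g :: "nat \<Rightarrow> 'y \<Rightarrow> real" assume g: "g \<in> pi_dual_ball ?r n"
    define h where "h i = band_component (g i) (pprt (T (x i)))" for i
    define k where "k i = band_component (g i) (- nprt (T (x i)))" for i
    have h: "\<forall>i<n. dual_elem (h i) \<and> positive_functional (h i)" "weak_norm ?r n h \<le> 1"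
      unfolding h_def by (rule band_components_in_weak_ball[OF r g]; simp)+
    have k: "\<forall>i<n. dual_elem (k i) \<and> positive_functional (k i)" "weak_norm ?r n k \<le> 1"
      unfolding k_def by (rule band_components_in_weak_ball[OF r g]; simp)+
    have "(\<Sum>i<n. g i (lmod (T (x i)))) = (\<Sum>i<n. \<bar>h i (T (x i))\<bar>) + (\<Sum>i<n. \<bar>k i (T (x i))\<bar>)"
      using g positive_bounded_functional.lmod_eq_band_components
      by (auto simp: h_def k_def pi_dual_ball_def positive_bounded_functional_iff
          simp flip: sum.distrib intro!: sum.cong)
    also have "\<dots> \<le> C * lpnorm q n x * weak_norm ?r n h + C * lpnorm q n x * weak_norm ?r n k"
      by (intro add_mono summing h(1) k(1))
    also have "\<dots> \<le> C * lpnorm q n x * 1 + C * lpnorm q n x * 1"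
      using h(2) k(2) C lpnorm_nonneg[of q n x] by (intro add_mono mult_left_mono) auto
    finally show "(\<Sum>i<n. g i (lmod (T (x i)))) \<le> 2 * C * lpnorm q n x" by simp
  qed
  then show ?thesis using C by (intro exI[of _ "2 * C"]) auto
qed

lemma pos_strongly_summing_if_lp_pi_norm_le:
  fixes T :: "'e::real_normed_vector \<Rightarrow> 'y::banach_lattice"
  assumes p: "1 \<le> p" and C: "0 < C"
    and bound: "\<And>n x. lp_pi_norm p n (\<lambda>i. T (x i)) \<le> C * lpnorm q n x"
  shows "pos_strongly_summing p q T"
  unfolding pos_strongly_summing_def
proof (intro exI[of _ C] conjI allI impI)
  fix n x and ys :: "nat \<Rightarrow> 'y \<Rightarrow> real"
  assume ys: "\<forall>i<n. dual_elem (ys i) \<and> positive_functional (ys i)"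
  let ?W = "weak_norm (conj_exp p) n ys"
  have "(\<Sum>i<n. \<bar>ys i (T (x i))\<bar>) \<le> ?W * lp_pi_norm p n (\<lambda>i. T (x i))"
    by (rule sum_abs_le_weak_norm_mult_lp_pi_norm[OF p ys])
  also have "\<dots> \<le> ?W * (C * lpnorm q n x)"
    using ys by (intro mult_left_mono bound weak_norm_nonneg conj_exp_pos[OF p]) auto
  finally show "(\<Sum>i<n. \<bar>ys i (T (x i))\<bar>) \<le> C * lpnorm q n x * ?W"
    by (simp add: ac_simps)
qed (rule C)

lemma lp_pi_norm_1_le:
  assumes "bounded_linear T"
  shows "\<exists>C>0. \<forall>n x. lp_pi_norm 1 n (\<lambda>i. T (x i)) \<le> C * lpnorm 1 n x"
proof -
  obtain K where K: "0 < K" "\<And>x. norm (T x) \<le> norm x * K"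
    using bounded_linear.pos_bounded[OF assms] by blast
  have "lp_pi_norm 1 n (\<lambda>i. T (x i)) \<le> K * lpnorm 1 n x" for n x
    unfolding lp_pi_norm_def lpnorm_one sum_distrib_left
    using K(2) by (simp add: sum_mono mult.commute)
  then show ?thesis using K(1) by blast
qed

theorem lemma3p1:
  fixes T :: "'e::banach \<Rightarrow> 'y::banach_lattice"
    and p q :: ereal
  assumes "1 \<le> q" and "q \<le> p"
    and "bounded_linear T"
  shows "pos_strongly_summing p q T \<longleftrightarrow>
         (\<exists>C>0. \<forall>n (x :: nat \<Rightarrow> 'e).
            lp_pi_norm p n (\<lambda>i. T (x i)) \<le> C * lpnorm q n x)"
proof
  assume summing: "pos_strongly_summing p q T"
  show "\<exists>C>0. \<forall>n x. lp_pi_norm p n (\<lambda>i. T (x i)) \<le> C * lpnorm q n x"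
  proof (cases "p = 1")
    case True
    with assms(1,2) have "q = 1" by simp
    with True show ?thesis using lp_pi_norm_1_le[OF assms(3)] by simp
  next
    case False
    with assms(1,2) have "1 < p" by simp
    then show ?thesis using summing by (rule lp_pi_norm_le_if_pos_strongly_summing)
  qed
next
  assume "\<exists>C>0. \<forall>n x. lp_pi_norm p n (\<lambda>i. T (x i)) \<le> C * lpnorm q n x"
  moreover have "1 \<le> p" using assms(1,2) by simp
  ultimately show "pos_strongly_summing p q T"
    using pos_strongly_summing_if_lp_pi_norm_le by blast
qed

end
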